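(* Let $n$ be a power of $2$, $\delta\in(0,1)$, and $y_i=\theta_i+\epsilon_i$ ($i=1,\dots,n$) with $\epsilon_i$ i.i.d. mean-zero $\sigma$-sub-Gaussian. For $t\in\{1,\dots,n\}$ let $\bar\theta_{t:1}=(\theta_1+\dots+\theta_t)/t$. For $r\in\{1,\dots,n\}$ let $S(r)=\{1,2,4,\dots,2^{\lfloor\log_2 r\rfloor}\}$ and $$U(r)=\Big(\max_{t\in S(r)}|\bar\theta_{t:1}-\theta_1|\Big)\vee\frac{\sigma}{\sqrt r},$$ and let $r^*$ be the smallest $r\in\{1,\dots,n\}$ attaining $\min_{r}U(r)$. Let $\hat\theta_1$ be the output of Algorithm 1 run with the orthonormal Haar transform matrix and threshold $\lambda=2\sigma\sqrt{2\log(\log n/\delta)}$. Then with probability at least $1-\delta$, $$|\hat\theta_1-\theta_1|\le\kappa\cdot U(r^* ),\qquad \kappa=\Big(4\sqrt{2\log(\log n/\delta)}\vee 2\sqrt2\Big)(\log_2 n+1).$$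
   Context: $a\vee b=\max\{a,b\}$. $\sigma$-sub-Gaussian: $\mathbb E[e^{s\epsilon}]\le e^{s^2\sigma^2/2}$ for all $s$. Algorithm 1 with input $y_n,\dots,y_1$, orthonormal $\mathbf W$, threshold $\lambda$: set $\mathbf y=(y_n,\dots,y_1)^T$, $\tilde{\boldsymbol\beta}=\mathbf W\mathbf y$, $\hat\beta_i=\mathrm{sign}(\tilde\beta_i)\max\{|\tilde\beta_i|-\lambda,0\}$, $\hat{\boldsymbol\theta}=\mathbf W^T\hat{\boldsymbol\beta}$, output the last coordinate $\hat\theta_1$ of $\hat{\boldsymbol\theta}$. The orthonormal Haar matrix: first row constant $1/\sqrt n$; for $j\in\{0,\dots,\log_2 n-1\}$, $k\in\{0,\dots,2^j-1\}$, a row supported on positions $kn/2^j+1,\dots,(k+1)n/2^j$ equal to $+\sqrt{2^j/n}$ on the first half of the block and $-\sqrt{2^j/n}$ on the second half. *)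

theory Defs
  imports "HOL-Probability.Probability"
begin

text \<open>Orthonormal Haar matrix of size n (n a power of 2), 0-based indices. Row i \<ge> 1 is written i = 2^j + k with
  j = floor(log2 i), 0 \<le> k < 2^j; it is supported on the (0-based) positions
  k*n/2^j, ..., (k+1)*n/2^j - 1, equal to +sqrt(2^j/n) on the first half of
  the block and -sqrt(2^j/n) on the second half.\<close>
definition haar :: "nat \<Rightarrow> nat \<Rightarrow> nat \<Rightarrow> real" where
  "haar n i p =
     (if i = 0 then 1 / sqrt (real n)
      else (let j = nat \<lfloor>log 2 (real i)\<rfloor>; k = i - 2 ^ j; b = n div 2 ^ j in
            if k * b \<le> p \<and> p < k * b + b div 2 then sqrt (2 ^ j / real n)
            else if k * b + b div 2 \<le> p \<and> p < (k + 1) * b then - sqrt (2 ^ j / real n)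
            else 0))"

definition soft_thresh :: "real \<Rightarrow> real \<Rightarrow> real" where
  "soft_thresh lam b = sgn b * max (\<bar>b\<bar> - lam) 0"

text \<open>Algorithm 1. Input y :: nat => real with y_1,...,y_n at indices 1..n.
  W is an n x n matrix given by 0-based entries W i p.
  Output: last coordinate (0-based index n-1) of W^T (soft-thresholded W y).\<close>
definition alg1 :: "nat \<Rightarrow> (nat \<Rightarrow> nat \<Rightarrow> real) \<Rightarrow> real \<Rightarrow> (nat \<Rightarrow> real) \<Rightarrow> real" where
  "alg1 n W lam y =
     (let yv = (\<lambda>p. y (n - p));
          btil = (\<lambda>i. \<Sum>p<n. W i p * yv p);
          bhat = (\<lambda>i. soft_thresh lam (btil i))
      in \<Sum>i<n. W i (n - 1) * bhat i)"

definition run_mean :: "(nat \<Rightarrow> real) \<Rightarrow> nat \<Rightarrow> real" where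
  "run_mean \<theta> t = (\<Sum>i=1..t. \<theta> i) / real t"

definition S_set :: "nat \<Rightarrow> nat set" where
  "S_set r = {2 ^ k | k. k \<le> nat \<lfloor>log 2 (real r)\<rfloor>}"

definition U_fun :: "real \<Rightarrow> (nat \<Rightarrow> real) \<Rightarrow> nat \<Rightarrow> real" where
  "U_fun \<sigma> \<theta> r = max (Max ((\<lambda>t. \<bar>run_mean \<theta> t - \<theta> 1\<bar>) ` S_set r)) (\<sigma> / sqrt (real r))"

definition r_star :: "nat \<Rightarrow> real \<Rightarrow> (nat \<Rightarrow> real) \<Rightarrow> nat" where
  "r_star n \<sigma> \<theta> = (LEAST r. r \<in> {1..n} \<and> U_fun \<sigma> \<theta> r = Min (U_fun \<sigma> \<theta> ` {1..n}))"

definition sub_gaussian :: "'a measure \<Rightarrow> real \<Rightarrow> ('a \<Rightarrow> real) \<Rightarrow> bool" where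
  "sub_gaussian M \<sigma> X \<longleftrightarrow>
     (\<forall>s::real. integrable M (\<lambda>x. exp (s * X x)) \<and>
        (\<integral>x. exp (s * X x) \<partial>M) \<le> exp (s^2 * \<sigma>^2 / 2))"

end

theory Submission
  imports Defs "HOL-Analysis.Harmonic_Numbers"
begin

text \<open>
  For \<open>n = 2^m\<close> only \<open>m + 1\<close> Haar rows meet the entry holding \<open>y 1\<close>, so the estimate is
  \<open>\<Sum>k. w\<^sub>k * soft(c\<^sub>k y)\<close>, while \<open>\<Sum>k. w\<^sub>k * c\<^sub>k \<theta> = \<theta> 1\<close>; here \<open>c\<^sub>k \<theta>\<close> is \<open>sqrt (2^k)\<close> times the
  difference of the running means of \<open>\<theta>\<close> over \<open>2^k\<close> and \<open>2^(k-1)\<close> points. Each noise coefficient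
  is a unit-norm combination of the \<open>\<epsilon> i\<close>, hence \<open>\<sigma>\<close>-sub-Gaussian. If all of them stay below
  \<open>3/4\<close> of the threshold \<open>2 \<sigma> L\<close>, every term errs by at most \<open>4 L U(r)\<close> for any \<open>r\<close>: at scales
  \<open>2^k \<le> r\<close> the signal coefficient is at most \<open>2 sqrt (2^k) U(r)\<close>, at coarser scales the noise level
  \<open>\<sigma> / sqrt (2^k)\<close> is below \<open>U(r)\<close>. A union bound over the \<open>m + 1\<close> coefficients settles the case
  \<open>m \<ge> 4\<close>, \<open>ln (ln n / \<delta>) \<ge> 9/8\<close>. In the remaining cases (\<open>n \<le> 16\<close>) the crude bound
  \<open>\<bar>\<epsilon> 1\<bar> + \<bar>\<lambda>\<bar> \<Sum>k. \<bar>w\<^sub>k\<bar>\<close> together with \<open>U(r) \<ge> \<sigma> / sqrt n\<close> and the \<open>2 sqrt 2\<close> term of \<open>\<kappa>\<close>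
  suffices, by a numerical case analysis.
\<close>

section \<open>Sub-Gaussian tails\<close>

lemma sub_gaussian_uminus:
  assumes "sub_gaussian M \<sigma> X"
  shows "sub_gaussian M \<sigma> (\<lambda>x. - X x)"
  unfolding sub_gaussian_def
proof
  fix s :: real
  show "integrable M (\<lambda>x. exp (s * - X x)) \<and> (\<integral>x. exp (s * - X x) \<partial>M) \<le> exp (s\<^sup>2 * \<sigma>\<^sup>2 / 2)"
    using assms[unfolded sub_gaussian_def, rule_format, of "- s"] by simp
qed

lemma sub_gaussian_upper_tail:
  assumes "prob_space M" "X \<in> borel_measurable M" "sub_gaussian M \<sigma> X" "0 < \<sigma>" "0 \<le> t"
  shows "measure M {x\<in>space M. t \<le> X x} \<le> exp (- t\<^sup>2 / (2 * \<sigma>\<^sup>2))"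
proof -
  interpret prob_space M by fact
  define s where "s = t / \<sigma>\<^sup>2"
  have s: "0 \<le> s" using assms by (simp add: s_def)
  have int: "integrable M (\<lambda>x. exp (s * X x))" and mgf: "(\<integral>x. exp (s * X x) \<partial>M) \<le> exp (s\<^sup>2 * \<sigma>\<^sup>2 / 2)"
    using assms(3) unfolding sub_gaussian_def by auto
  have "measure M {x\<in>space M. t \<le> X x} \<le> measure M {x\<in>space M. exp (s * t) \<le> exp (s * X x)}"
    using assms(2) s by (intro finite_measure_mono) (auto intro: mult_left_mono)
  also have "\<dots> \<le> (\<integral>x. exp (s * X x) \<partial>M) / exp (s * t)"
    using int assms(2) by (intro integral_Markov_inequality_measure[where A="space M"]) auto
  also have "\<dots> \<le> exp (s\<^sup>2 * \<sigma>\<^sup>2 / 2 - s * t)"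
    using mgf by (simp add: exp_diff divide_right_mono)
  also have "s\<^sup>2 * \<sigma>\<^sup>2 / 2 - s * t = - t\<^sup>2 / (2 * \<sigma>\<^sup>2)"
    using assms(4) by (simp add: s_def field_simps power2_eq_square)
  finally show ?thesis .
qed

lemma sub_gaussian_abs_tail:
  assumes "prob_space M" "X \<in> borel_measurable M" "sub_gaussian M \<sigma> X" "0 < \<sigma>" "0 \<le> t"
  shows "measure M {x\<in>space M. t < \<bar>X x\<bar>} \<le> 2 * exp (- t\<^sup>2 / (2 * \<sigma>\<^sup>2))"
proof -
  interpret prob_space M by fact
  have "measure M {x\<in>space M. t < \<bar>X x\<bar>}
          \<le> measure M ({x\<in>space M. t \<le> X x} \<union> {x\<in>space M. t \<le> - X x})"
    using assms(2) by (intro finite_measure_mono) auto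
  also have "\<dots> \<le> measure M {x\<in>space M. t \<le> X x} + measure M {x\<in>space M. t \<le> - X x}"
    using assms(2) by (intro measure_Un_le) auto
  also have "\<dots> \<le> exp (- t\<^sup>2 / (2 * \<sigma>\<^sup>2)) + exp (- t\<^sup>2 / (2 * \<sigma>\<^sup>2))"
    using assms by (intro add_mono sub_gaussian_upper_tail sub_gaussian_uminus) auto
  finally show ?thesis by simp
qed

lemma sub_gaussian_weighted_sum:
  assumes "prob_space M" "finite I" "prob_space.indep_vars M (\<lambda>_. borel) \<epsilon> I"
    and "\<And>i. i \<in> I \<Longrightarrow> sub_gaussian M \<sigma> (\<epsilon> i)"
    and "(\<Sum>i\<in>I. (a i)\<^sup>2) \<le> 1"
  shows "sub_gaussian M \<sigma> (\<lambda>x. \<Sum>i\<in>I. a i * \<epsilon> i x)"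
  unfolding sub_gaussian_def
proof
  interpret prob_space M by fact
  fix s :: real
  define Y where "Y i x = exp ((s * a i) * \<epsilon> i x)" for i x
  have exp_as_prod: "exp (s * (\<Sum>i\<in>I. a i * \<epsilon> i x)) = (\<Prod>i\<in>I. Y i x)" for x
    using assms(2) by (simp add: Y_def sum_distrib_left exp_sum mult.assoc)
  have indep: "indep_vars (\<lambda>_. borel) Y I"
    unfolding Y_def by (rule indep_vars_compose2[OF assms(3)]) auto
  have int: "integrable M (Y i)" and mgf: "(\<integral>x. Y i x \<partial>M) \<le> exp ((s * a i)\<^sup>2 * \<sigma>\<^sup>2 / 2)"
    if "i \<in> I" for i
    using assms(4)[OF that, unfolded sub_gaussian_def, rule_format, of "s * a i"]
    unfolding Y_def by simp_all
  have "(\<integral>x. (\<Prod>i\<in>I. Y i x) \<partial>M) = (\<Prod>i\<in>I. \<integral>x. Y i x \<partial>M)"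
    by (rule indep_vars_lebesgue_integral[OF assms(2) indep int])
  also have "\<dots> \<le> (\<Prod>i\<in>I. exp ((s * a i)\<^sup>2 * \<sigma>\<^sup>2 / 2))"
    by (intro prod_mono conjI mgf integral_nonneg_AE) (auto simp: Y_def)
  also have "\<dots> = exp (s\<^sup>2 * \<sigma>\<^sup>2 / 2 * (\<Sum>i\<in>I. (a i)\<^sup>2))"
    using assms(2) by (simp add: exp_sum[symmetric] sum_distrib_left power_mult_distrib mult_ac)
  also have "\<dots> \<le> exp (s\<^sup>2 * \<sigma>\<^sup>2 / 2)"
    using assms(5) by (simp add: mult_left_le)
  finally show "integrable M (\<lambda>x. exp (s * (\<Sum>i\<in>I. a i * \<epsilon> i x))) \<and>
      (\<integral>x. exp (s * (\<Sum>i\<in>I. a i * \<epsilon> i x)) \<partial>M) \<le> exp (s\<^sup>2 * \<sigma>\<^sup>2 / 2)"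
    unfolding exp_as_prod using indep_vars_integrable[OF assms(2) indep int] by simp
qed

section \<open>The Haar rows meeting the first observation\<close>

text \<open>For \<open>n = 2^m\<close> the entry \<open>n - 1\<close> of the reversed input holds \<open>y 1\<close>. Besides row \<open>0\<close> it meets
  exactly one row per scale \<open>2^k\<close>, \<open>1 \<le> k \<le> m\<close>: the last row of that scale, \<open>haar_path_row m k\<close>,
  whose entry at the position of \<open>y i\<close> is \<open>haar_filter n k i\<close>.\<close>

definition haar_path_row :: "nat \<Rightarrow> nat \<Rightarrow> nat" where
  "haar_path_row m k = (if k = 0 then 0 else 2 ^ (m - k + 1) - 1)"

definition haar_filter :: "nat \<Rightarrow> nat \<Rightarrow> nat \<Rightarrow> real" where
  "haar_filter n k i =
     (if k = 0 then 1 / sqrt (real n)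
      else (if i \<le> 2 ^ (k - 1) then -1 else if i \<le> 2 ^ k then 1 else 0) / sqrt (2 ^ k))"

definition haar_coeff :: "nat \<Rightarrow> nat \<Rightarrow> (nat \<Rightarrow> real) \<Rightarrow> real" where
  "haar_coeff n k y = (\<Sum>i=1..n. haar_filter n k i * y i)"

lemma nat_floor_log2_eq:
  assumes "2 ^ j \<le> i" "i < (2::nat) ^ (j + 1)"
  shows "nat \<lfloor>log 2 (real i)\<rfloor> = j"
proof -
  have "0 < i" using assms(1) by (metis le_0_eq not_gr_zero power_not_zero zero_neq_numeral)
  then have "\<lfloor>log (real 2) (real i)\<rfloor> = int j"
    using assms by (subst floor_log_nat_eq_powr_iff) auto
  then show ?thesis by simp
qed

lemma haar_last_column_eq_0:
  assumes n: "n = 2 ^ m" and "i < n" and not_path: "i \<notin> haar_path_row m ` {0..m}"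
  shows "haar n i (n - 1) = 0"
proof -
  have "i \<noteq> 0" using not_path by (force simp: haar_path_row_def)
  define j where "j = nat \<lfloor>log 2 (real i)\<rfloor>"
  have level: "2 ^ j \<le> i \<and> i < 2 ^ (j + 1)"
    using floor_log_nat_eq_powr_iff[of 2 i j] \<open>i \<noteq> 0\<close> by (simp add: j_def)
  have "j < m"
    using level \<open>i < n\<close> n by (metis linorder_not_less order_le_less_trans power_increasing_iff
        one_less_numeral_iff semiring_norm(76))
  define b :: nat where "b = 2 ^ (m - j)"
  have blocks: "n = 2 ^ j * b" and "2 \<le> b"
    using \<open>j < m\<close> n power_increasing[of 1 "m - j" "2::nat"] by (simp_all add: b_def flip: power_add)
  define k :: nat where "k = i - 2 ^ j"
  have "k \<noteq> 2 ^ j - 1"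
  proof
    assume "k = 2 ^ j - 1"
    then have "i = haar_path_row m (m - j)"
      using level \<open>j < m\<close> by (simp add: k_def haar_path_row_def Suc_diff_le) arith
    then show False using not_path by auto
  qed
  then have "k + 1 \<le> 2 ^ j - 1" using level by (simp add: k_def) arith
  then have "(k + 1) * b \<le> n - b"
    using blocks by (metis diff_mult_distrib mult_1 mult_le_mono1)
  then show ?thesis
    using \<open>i \<noteq> 0\<close> \<open>2 \<le> b\<close> blocks
    by (simp add: haar_def Let_def j_def[symmetric] k_def[symmetric] b_def[symmetric]) linarith
qed

lemma haar_path_row_entry:
  assumes n: "n = 2 ^ m" and "k \<le> m" and "1 \<le> i" "i \<le> n"
  shows "haar n (haar_path_row m k) (n - i) = haar_filter n k i"
proof (cases "k = 0")
  case True
  then show ?thesis by (simp add: haar_path_row_def haar_def haar_filter_def)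
next
  case False
  define j where "j = m - k"
  define h :: nat where "h = 2 ^ (k - 1)"
  define B :: nat where "B = 2 ^ k"
  have row: "haar_path_row m k = 2 ^ (j + 1) - 1"
    using False \<open>k \<le> m\<close> by (simp add: haar_path_row_def j_def Suc_diff_le)
  have "(2::nat) \<le> 2 ^ (j + 1)" using power_increasing[of 1 "j + 1" "2::nat"] by simp
  then have level: "nat \<lfloor>log 2 (real (haar_path_row m k))\<rfloor> = j"
    by (intro nat_floor_log2_eq) (auto simp: row)
  have "haar_path_row m k \<noteq> 0" using \<open>2 \<le> 2 ^ (j + 1)\<close> row by linarith
  have blocks: "n = 2 ^ j * B" and "B = 2 * h"
    using n \<open>k \<le> m\<close> False by (simp_all add: j_def h_def B_def flip: power_add power_Suc)
  then have "B \<le> n" by simp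
  have offset: "haar_path_row m k - 2 ^ j = 2 ^ j - 1" by (simp add: row)
  have block_size: "n div 2 ^ j = B" "B div 2 = h" using blocks \<open>B = 2 * h\<close> by simp_all
  have block_start: "(2 ^ j - 1) * B = n - B" and block_end: "(2 ^ j - 1 + 1) * B = n"
    using blocks by (simp_all add: diff_mult_distrib)
  have height: "sqrt (2 ^ j / real n) = 1 / sqrt (2 ^ k)"
    using blocks(1) by (simp add: B_def real_sqrt_divide)
  have first_half: "(n - B \<le> n - i \<and> n - i < n - B + h) \<longleftrightarrow> (h < i \<and> i \<le> B)"
    and second_half: "(n - B + h \<le> n - i \<and> n - i < n) \<longleftrightarrow> i \<le> h"
    using \<open>1 \<le> i\<close> \<open>i \<le> n\<close> \<open>B \<le> n\<close> \<open>B = 2 * h\<close> by linarith+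
  have "haar n (haar_path_row m k) (n - i)
      = (if h < i \<and> i \<le> B then 1 / sqrt (2 ^ k) else if i \<le> h then - (1 / sqrt (2 ^ k)) else 0)"
    using \<open>haar_path_row m k \<noteq> 0\<close> first_half second_half
    unfolding haar_def Let_def level offset block_size block_start block_end height
    by simp
  then show ?thesis
    using False by (auto simp: haar_filter_def h_def B_def)
qed

lemma haar_path_row_Suc:
  assumes "k \<noteq> 0"
  shows "haar_path_row m k + 1 = 2 ^ (m - k + 1)"
  using assms one_le_power[of "2::nat" "m - k + 1"] by (simp add: haar_path_row_def)

lemma inj_on_haar_path_row: "inj_on (haar_path_row m) {0..m}"
proof (rule inj_onI)
  fix a b assume "a \<in> {0..m}" "b \<in> {0..m}" and eq: "haar_path_row m a = haar_path_row m b"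
  have nonzero: "haar_path_row m k \<noteq> 0" if "k \<noteq> 0" for k
    using haar_path_row_Suc[OF that, of m] one_less_power[of "2::nat" "m - k + 1"] by linarith
  have "haar_path_row m 0 = 0" by (simp add: haar_path_row_def)
  then have "a = 0 \<longleftrightarrow> b = 0"
    using eq nonzero by metis
  moreover have "m - a + 1 = m - b + 1" if "a \<noteq> 0" "b \<noteq> 0"
    using eq haar_path_row_Suc[OF that(1), of m] haar_path_row_Suc[OF that(2), of m]
    by (simp add: power_inject_exp)
  ultimately show "a = b" using \<open>a \<in> {0..m}\<close> \<open>b \<in> {0..m}\<close> by fastforce
qed

lemma haar_path_row_less:
  assumes "n = 2 ^ m" "k \<le> m"
  shows "haar_path_row m k < n"
proof (cases "k = 0")
  case False
  have "(2::nat) ^ (m - k + 1) \<le> 2 ^ m"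
    using False assms(2) by (intro power_increasing) auto
  then show ?thesis
    using haar_path_row_Suc[OF False, of m] assms(1) by linarith
qed (simp add: assms(1) haar_path_row_def)

lemma alg1_haar_eq:
  assumes n: "n = 2 ^ m"
  shows "alg1 n (haar n) lam y = (\<Sum>k=0..m. haar_filter n k 1 * soft_thresh lam (haar_coeff n k y))"
proof -
  let ?c = "\<lambda>i. soft_thresh lam (\<Sum>i'=1..n. haar n i (n - i') * y i')"
  have reversed: "(\<Sum>p<n. haar n i p * y (n - p)) = (\<Sum>i'=1..n. haar n i (n - i') * y i')" for i
    by (rule sum.reindex_bij_witness[where i="\<lambda>i'. n - i'" and j="\<lambda>p. n - p"]) auto
  have "alg1 n (haar n) lam y = (\<Sum>i<n. haar n i (n - 1) * ?c i)"
    unfolding alg1_def Let_def reversed ..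
  also have "\<dots> = (\<Sum>i\<in>haar_path_row m ` {0..m}. haar n i (n - 1) * ?c i)"
    using haar_last_column_eq_0[OF n] haar_path_row_less[OF n]
    by (intro sum.mono_neutral_right) auto
  also have "\<dots> = (\<Sum>k=0..m. haar n (haar_path_row m k) (n - 1) * ?c (haar_path_row m k))"
    by (rule sum.reindex[OF inj_on_haar_path_row, unfolded comp_def])
  also have "\<dots> = (\<Sum>k=0..m. haar_filter n k 1 * soft_thresh lam (haar_coeff n k y))"
    unfolding haar_coeff_def using haar_path_row_entry[OF n] n by (intro sum.cong refl) simp
  finally show ?thesis .
qed

lemma haar_filter_eq_0:
  assumes "k \<noteq> 0" "2 ^ k < i"
  shows "haar_filter n k i = 0"
proof -
  have "(2::nat) ^ (k - 1) \<le> 2 ^ k" by (simp add: power_increasing)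
  then have "\<not> i \<le> 2 ^ (k - 1)" "\<not> i \<le> 2 ^ k" using assms(2) by linarith+
  then show ?thesis using assms(1) by (simp add: haar_filter_def)
qed

lemma haar_coeff_0:
  assumes "0 < n"
  shows "haar_coeff n 0 y = sqrt (real n) * run_mean y n"
proof -
  have "haar_coeff n 0 y = (\<Sum>i=1..n. y i) / sqrt (real n)"
    by (simp add: haar_coeff_def haar_filter_def sum_divide_distrib)
  also have "\<dots> = sqrt (real n) * ((\<Sum>i=1..n. y i) / real n)"
    using assms by (metis of_nat_0_le_iff real_div_sqrt times_divide_eq_left times_divide_eq_right divide_divide_eq_right mult.commute)
  finally show ?thesis by (simp add: run_mean_def)
qed

lemma haar_coeff_run_mean:
  assumes n: "n = 2 ^ m" and "1 \<le> k" "k \<le> m"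
  shows "haar_coeff n k y = sqrt (2 ^ k) * (run_mean y (2 ^ k) - run_mean y (2 ^ (k - 1)))"
proof -
  define h :: nat where "h = 2 ^ (k - 1)"
  have B: "2 ^ k = h + h" using \<open>1 \<le> k\<close> by (cases k) (simp_all add: h_def)
  have "2 ^ k \<le> n" using n \<open>k \<le> m\<close> by (simp add: power_increasing)
  define g where "g i = (if i \<le> h then - y i else if i \<le> 2 ^ k then y i else 0)" for i
  have "haar_coeff n k y = (\<Sum>i=1..n. g i) / sqrt (2 ^ k)"
    unfolding haar_coeff_def haar_filter_def g_def sum_divide_distrib h_def
    using \<open>1 \<le> k\<close> by (intro sum.cong refl) auto
  also have "(\<Sum>i=1..n. g i) = (\<Sum>i=1..h + h. g i)"
    using \<open>2 ^ k \<le> n\<close> by (intro sum.mono_neutral_right) (auto simp: g_def B)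
  also have "\<dots> = (\<Sum>i=1..h. g i) + (\<Sum>i=h+1..h+h. g i)"
    by (rule sum.ub_add_nat) simp
  also have "\<dots> = (\<Sum>i=1..h+h. y i) - 2 * (\<Sum>i=1..h. y i)"
    using sum.ub_add_nat[of 1 h y h] by (simp add: g_def B sum_negf)
  also have "\<dots> / sqrt (2 ^ k) = sqrt (2 ^ k) * (run_mean y (2 ^ k) - run_mean y h)"
  proof -
    define r where "r = sqrt (2 ^ k)"
    have "0 < r" "r * r = 2 * real h"
      using arg_cong[OF B, of real] by (simp_all add: r_def h_def)
    have "r * (run_mean y (2 ^ k) - run_mean y h) = r * (((\<Sum>i=1..h+h. y i) - 2 * (\<Sum>i=1..h. y i)) / (2 * real h))"
      using \<open>r * r = 2 * real h\<close> \<open>0 < r\<close> unfolding run_mean_def B by (simp add: field_simps h_def)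
    also have "\<dots> = ((\<Sum>i=1..h+h. y i) - 2 * (\<Sum>i=1..h. y i)) / r"
      using \<open>0 < r\<close> by (simp flip: \<open>r * r = 2 * real h\<close>)
    finally show ?thesis by (simp add: r_def)
  qed
  finally show ?thesis by (simp add: h_def)
qed

lemma haar_reconstruct_first:
  assumes n: "n = 2 ^ m"
  shows "(\<Sum>k=0..m. haar_filter n k 1 * haar_coeff n k y) = y 1"
proof -
  define D where "D k = run_mean y (2 ^ k)" for k
  have detail: "haar_filter n k 1 * haar_coeff n k y = D (k - 1) - D k" if "1 \<le> k" "k \<le> m" for k
    using that by (simp add: haar_filter_def haar_coeff_run_mean[OF n] D_def)
  have telescope: "(\<Sum>k=1..j. D (k - 1) - D k) = D 0 - D j" for j
    by (induction j) (simp_all add: sum.cl_ivl_Suc)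
  have "(\<Sum>k=0..m. haar_filter n k 1 * haar_coeff n k y)
      = haar_filter n 0 1 * haar_coeff n 0 y + (\<Sum>k=1..m. haar_filter n k 1 * haar_coeff n k y)"
    by (simp add: sum.atLeast_Suc_atMost)
  also have "haar_filter n 0 1 * haar_coeff n 0 y = D m"
    using n by (simp add: haar_filter_def haar_coeff_0 D_def)
  also have "(\<Sum>k=1..m. haar_filter n k 1 * haar_coeff n k y) = (\<Sum>k=1..m. D (k - 1) - D k)"
    using detail by (intro sum.cong) auto
  also have "\<dots> = D 0 - D m" by (rule telescope)
  finally show ?thesis by (simp add: D_def run_mean_def)
qed

lemma haar_filter_sum_squares:
  assumes n: "n = 2 ^ m" and "k \<le> m"
  shows "(\<Sum>i=1..n. (haar_filter n k i)\<^sup>2) = 1"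
proof (cases "k = 0")
  case True
  then show ?thesis using n by (simp add: haar_filter_def power_divide)
next
  case False
  have "2 ^ k \<le> n"
    using n \<open>k \<le> m\<close> by (simp add: power_increasing)
  then have "(\<Sum>i=1..n. (haar_filter n k i)\<^sup>2) = (\<Sum>i=1..2 ^ k. (haar_filter n k i)\<^sup>2)"
    using False by (intro sum.mono_neutral_right) (auto simp: haar_filter_eq_0)
  also have "\<dots> = (\<Sum>i::nat=1..2 ^ k. 1 / (2::real) ^ k)"
    using False by (intro sum.cong refl) (auto simp: haar_filter_def power_divide)
  finally show ?thesis by simp
qed

section \<open>Error of the thresholded estimate\<close>

lemma soft_thresh_dist: "\<bar>soft_thresh lam x - x\<bar> \<le> \<bar>lam\<bar>"
  unfolding soft_thresh_def by (cases "x > 0"; cases "x < 0") (auto simp: max_def)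

lemma soft_thresh_eq_0: "0 \<le> lam \<Longrightarrow> \<bar>x\<bar> \<le> lam \<Longrightarrow> soft_thresh lam x = 0"
  unfolding soft_thresh_def by (auto simp: max_def)

lemma soft_thresh_shift_dist:
  assumes "0 \<le> lam"
  shows "\<bar>soft_thresh lam (s + z) - s\<bar> \<le> max \<bar>s\<bar> \<bar>z\<bar>"
proof -
  have "min 0 (s + z) \<le> soft_thresh lam (s + z) \<and> soft_thresh lam (s + z) \<le> max 0 (s + z)"
    using assms unfolding soft_thresh_def by (auto simp: sgn_if max_def min_def)
  then show ?thesis by (smt (verit))
qed

lemma soft_thresh_error_bound:
  fixes \<sigma> L lam s z b U :: real
  assumes "0 < \<sigma>" "3/2 \<le> L" "lam = 2 * \<sigma> * L" "\<bar>z\<bar> \<le> 3/2 * \<sigma> * L" "0 < b"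
    and "\<bar>s\<bar> \<le> 2 * sqrt b * U \<or> \<sigma> / sqrt b \<le> U"
  shows "\<bar>soft_thresh lam (s + z) - s\<bar> / sqrt b \<le> 4 * L * U"
  using assms(6)
proof
  assume small: "\<bar>s\<bar> \<le> 2 * sqrt b * U"
  have "0 \<le> U" using small \<open>0 < b\<close> by (smt (verit) real_sqrt_gt_zero zero_le_mult_iff)
  have "0 \<le> lam" using assms(1-3) by simp
  have "\<bar>soft_thresh lam (s + z) - s\<bar> \<le> 3 * \<bar>s\<bar>"
  proof (cases "\<bar>s + z\<bar> \<le> lam")
    case True
    then show ?thesis using soft_thresh_eq_0[OF \<open>0 \<le> lam\<close>] by simp
  next
    case False
    then have "\<sigma> * L < 2 * \<bar>s\<bar>" using assms(3,4) by linarith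
    then have "\<bar>z\<bar> \<le> 3 * \<bar>s\<bar>" using assms(4) by linarith
    then show ?thesis using soft_thresh_shift_dist[OF \<open>0 \<le> lam\<close>, of s z] by simp
  qed
  then have "\<bar>soft_thresh lam (s + z) - s\<bar> / sqrt b \<le> 6 * U"
    using small \<open>0 < b\<close> by (simp add: divide_le_eq mult.commute mult.left_commute)
  also have "\<dots> \<le> 4 * L * U" using \<open>3/2 \<le> L\<close> \<open>0 \<le> U\<close> by (intro mult_right_mono) auto
  finally show ?thesis .
next
  assume noisy: "\<sigma> / sqrt b \<le> U"
  have "\<bar>soft_thresh lam (s + z) - s\<bar> \<le> \<bar>lam\<bar> + \<bar>z\<bar>"
    using soft_thresh_dist[of lam "s + z"] by linarith
  also have "\<dots> \<le> 4 * L * \<sigma>"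
    using assms(1-4) by (simp add: abs_mult mult.commute mult.left_commute)
  finally have "\<bar>soft_thresh lam (s + z) - s\<bar> / sqrt b \<le> 4 * L * (\<sigma> / sqrt b)"
    using \<open>0 < b\<close> by (simp add: divide_right_mono)
  also have "\<dots> \<le> 4 * L * U" using noisy \<open>3/2 \<le> L\<close> by (intro mult_left_mono) auto
  finally show ?thesis .
qed

lemma alg1_haar_error:
  assumes "n = 2 ^ m"
  shows "alg1 n (haar n) lam (\<lambda>i. \<theta> i + e i) - \<theta> 1
       = (\<Sum>k=0..m. haar_filter n k 1 * (soft_thresh lam (haar_coeff n k \<theta> + haar_coeff n k e) - haar_coeff n k \<theta>))"
proof -
  have "haar_coeff n k (\<lambda>i. \<theta> i + e i) = haar_coeff n k \<theta> + haar_coeff n k e" for k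
    by (simp add: haar_coeff_def distrib_left sum.distrib)
  then show ?thesis
    unfolding alg1_haar_eq[OF assms] haar_reconstruct_first[OF assms, of \<theta>, symmetric]
    by (simp add: sum_subtractf[symmetric] right_diff_distrib)
qed

lemma alg1_haar_error_crude:
  assumes "n = 2 ^ m"
  shows "\<bar>alg1 n (haar n) lam (\<lambda>i. \<theta> i + e i) - \<theta> 1\<bar> \<le> \<bar>e 1\<bar> + \<bar>lam\<bar> * (\<Sum>k=0..m. \<bar>haar_filter n k 1\<bar>)"
proof -
  let ?y = "\<lambda>i. \<theta> i + e i"
  have "alg1 n (haar n) lam ?y - \<theta> 1
      = e 1 + (\<Sum>k=0..m. haar_filter n k 1 * (soft_thresh lam (haar_coeff n k ?y) - haar_coeff n k ?y))"
    unfolding alg1_haar_eq[OF assms] using haar_reconstruct_first[OF assms, of ?y]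
    by (simp add: sum_subtractf right_diff_distrib)
  also have "\<bar>\<dots>\<bar> \<le> \<bar>e 1\<bar> + (\<Sum>k=0..m. \<bar>haar_filter n k 1\<bar> * \<bar>lam\<bar>)"
    by (intro order_trans[OF abs_triangle_ineq] add_left_mono order_trans[OF sum_abs] sum_mono)
      (simp add: abs_mult mult_left_mono soft_thresh_dist)
  finally show ?thesis by (simp add: sum_distrib_left mult.commute)
qed

lemma finite_S_set: "finite (S_set r)"
proof -
  have "S_set r = (\<lambda>k. 2 ^ k) ` {..nat \<lfloor>log 2 (real r)\<rfloor>}" unfolding S_set_def by auto
  then show ?thesis by simp
qed

lemma U_fun_ge_noise: "\<sigma> / sqrt (real r) \<le> U_fun \<sigma> \<theta> r"
  unfolding U_fun_def by simp

lemma U_fun_ge_run_mean_dist: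
  assumes "2 ^ j \<le> r"
  shows "\<bar>run_mean \<theta> (2 ^ j) - \<theta> 1\<bar> \<le> U_fun \<sigma> \<theta> r"
proof -
  have "(2::real) ^ j \<le> real r" using assms by (metis of_nat_le_iff of_nat_numeral of_nat_power)
  then have "real j \<le> log 2 (real r)" by (rule le_log_of_power) simp
  then have "j \<le> nat \<lfloor>log 2 (real r)\<rfloor>" by (simp add: le_nat_iff le_floor_iff)
  then have "2 ^ j \<in> S_set r" unfolding S_set_def by auto
  then have "\<bar>run_mean \<theta> (2 ^ j) - \<theta> 1\<bar> \<le> Max ((\<lambda>t. \<bar>run_mean \<theta> t - \<theta> 1\<bar>) ` S_set r)"
    using finite_S_set by (intro Max_ge) auto
  then show ?thesis unfolding U_fun_def by linarith
qed

lemma r_star_mem: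
  assumes "1 \<le> n"
  shows "r_star n \<sigma> \<theta> \<in> {1..n}"
proof -
  have "Min (U_fun \<sigma> \<theta> ` {1..n}) \<in> U_fun \<sigma> \<theta> ` {1..n}"
    using assms by (intro Min_in) auto
  then have "\<exists>r. r \<in> {1..n} \<and> U_fun \<sigma> \<theta> r = Min (U_fun \<sigma> \<theta> ` {1..n})" by auto
  from LeastI_ex[OF this] show ?thesis unfolding r_star_def by blast
qed

definition haar_width :: "nat \<Rightarrow> nat \<Rightarrow> nat" where
  "haar_width n k = (if k = 0 then n else 2 ^ k)"

lemma abs_haar_filter_first: "0 < n \<Longrightarrow> \<bar>haar_filter n k 1\<bar> = 1 / sqrt (real (haar_width n k))"
  by (simp add: haar_filter_def haar_width_def)

lemma haar_coeff_small_or_noisy: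
  assumes n: "n = 2 ^ m" and "k \<le> m" "r \<in> {1..n}" "0 \<le> \<sigma>"
  defines "b \<equiv> real (haar_width n k)"
  shows "\<bar>haar_coeff n k \<theta>\<bar> \<le> 2 * sqrt b * U_fun \<sigma> \<theta> r \<or> \<sigma> / sqrt b \<le> U_fun \<sigma> \<theta> r"
proof (cases "k \<noteq> 0 \<and> 2 ^ k \<le> r")
  case True
  then have "2 ^ (k - 1) \<le> r" by (metis diff_le_self le_trans one_le_numeral power_increasing)
  then have "\<bar>run_mean \<theta> (2 ^ k) - run_mean \<theta> (2 ^ (k - 1))\<bar> \<le> 2 * U_fun \<sigma> \<theta> r"
    using U_fun_ge_run_mean_dist[of k r \<theta> \<sigma>] U_fun_ge_run_mean_dist[of "k - 1" r \<theta> \<sigma>] True by linarith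
  then have "\<bar>haar_coeff n k \<theta>\<bar> \<le> sqrt b * (2 * U_fun \<sigma> \<theta> r)"
    using True \<open>k \<le> m\<close> by (simp add: haar_coeff_run_mean[OF n] b_def haar_width_def abs_mult mult_left_mono)
  then show ?thesis by simp
next
  case False
  then have "real r \<le> b" using \<open>r \<in> {1..n}\<close> by (auto simp: b_def haar_width_def)
  then have "\<sigma> / sqrt b \<le> \<sigma> / sqrt (real r)"
    using \<open>r \<in> {1..n}\<close> \<open>0 \<le> \<sigma>\<close> by (intro divide_left_mono) auto
  then show ?thesis using U_fun_ge_noise[of \<sigma> r \<theta>] by linarith
qed

lemma alg1_haar_error_le_if_noise_small:
  assumes n: "n = 2 ^ m" and "0 < \<sigma>" "3/2 \<le> L" "lam = 2 * \<sigma> * L" "r \<in> {1..n}"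
    and small: "\<And>k. k \<le> m \<Longrightarrow> \<bar>haar_coeff n k e\<bar> \<le> 3/2 * \<sigma> * L"
  shows "\<bar>alg1 n (haar n) lam (\<lambda>i. \<theta> i + e i) - \<theta> 1\<bar> \<le> 4 * L * (real m + 1) * U_fun \<sigma> \<theta> r"
proof -
  let ?U = "U_fun \<sigma> \<theta> r"
  have term_bound: "\<bar>haar_filter n k 1 * (soft_thresh lam (haar_coeff n k \<theta> + haar_coeff n k e) - haar_coeff n k \<theta>)\<bar>
      \<le> 4 * L * ?U" if "k \<le> m" for k
  proof -
    define b where "b = real (haar_width n k)"
    have "0 < b" using n by (simp add: b_def haar_width_def)
    have "\<bar>soft_thresh lam (haar_coeff n k \<theta> + haar_coeff n k e) - haar_coeff n k \<theta>\<bar> / sqrt b \<le> 4 * L * ?U"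
      using assms(2-5) small[OF that] \<open>0 < b\<close> haar_coeff_small_or_noisy[OF n that \<open>r \<in> {1..n}\<close>, of \<sigma> \<theta>]
      by (intro soft_thresh_error_bound) (auto simp: b_def)
    moreover have "0 < n" using n by simp
    ultimately show ?thesis
      unfolding abs_mult abs_haar_filter_first[OF \<open>0 < n\<close>] b_def[symmetric] by simp
  qed
  have "\<bar>alg1 n (haar n) lam (\<lambda>i. \<theta> i + e i) - \<theta> 1\<bar>
      \<le> (\<Sum>k=0..m. \<bar>haar_filter n k 1 * (soft_thresh lam (haar_coeff n k \<theta> + haar_coeff n k e) - haar_coeff n k \<theta>)\<bar>)"
    unfolding alg1_haar_error[OF n] by (rule sum_abs)
  also have "\<dots> \<le> (\<Sum>k=0..m. 4 * L * ?U)"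
    using term_bound by (intro sum_mono) auto
  finally show ?thesis by (simp add: algebra_simps)
qed

lemma haar_coeff_measurable:
  assumes "\<And>i. i \<in> {1..n} \<Longrightarrow> \<epsilon> i \<in> borel_measurable M"
  shows "(\<lambda>x. haar_coeff n k (\<lambda>i. f i + \<epsilon> i x)) \<in> borel_measurable M"
  unfolding haar_coeff_def using assms by measurable

lemma soft_thresh_measurable [measurable]: "soft_thresh lam \<in> borel_measurable borel"
  unfolding soft_thresh_def[abs_def] by measurable

lemma alg1_haar_measurable:
  assumes "n = 2 ^ m" and "\<And>i. i \<in> {1..n} \<Longrightarrow> \<epsilon> i \<in> borel_measurable M"
  shows "(\<lambda>x. alg1 n (haar n) lam (\<lambda>i. f i + \<epsilon> i x)) \<in> borel_measurable M"
  unfolding alg1_haar_eq[OF assms(1)]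
  by (intro borel_measurable_sum borel_measurable_times borel_measurable_const
      measurable_compose[OF haar_coeff_measurable[OF assms(2)] soft_thresh_measurable])

lemma haar_noise_exceeds_prob:
  assumes "prob_space M" and n: "n = 2 ^ m"
    and rv: "\<And>i. i \<in> {1..n} \<Longrightarrow> \<epsilon> i \<in> borel_measurable M"
    and indep: "prob_space.indep_vars M (\<lambda>_. borel) \<epsilon> {1..n}"
    and subg: "\<And>i. i \<in> {1..n} \<Longrightarrow> sub_gaussian M \<sigma> (\<epsilon> i)"
    and "0 < \<sigma>" "0 \<le> t"
  shows "measure M {x\<in>space M. \<exists>k\<le>m. t < \<bar>haar_coeff n k (\<lambda>i. \<epsilon> i x)\<bar>}
           \<le> 2 * (real m + 1) * exp (- t\<^sup>2 / (2 * \<sigma>\<^sup>2))"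
proof -
  interpret prob_space M by fact
  define Z where "Z = (\<lambda>k x. haar_coeff n k (\<lambda>i. \<epsilon> i x))"
  have Z_measurable: "Z k \<in> borel_measurable M" for k
    using haar_coeff_measurable[of n \<epsilon> M k "\<lambda>_. 0", OF rv] by (simp add: Z_def)
  have "measure M {x\<in>space M. \<exists>k\<le>m. t < \<bar>Z k x\<bar>} = measure M (\<Union>k\<in>{0..m}. {x\<in>space M. t < \<bar>Z k x\<bar>})"
    by (rule arg_cong[where f="measure M"]) auto
  also have "\<dots> \<le> (\<Sum>k\<in>{0..m}. measure M {x\<in>space M. t < \<bar>Z k x\<bar>})"
    using Z_measurable by (intro finite_measure_subadditive_finite) auto
  also have "\<dots> \<le> (\<Sum>k\<in>{0..m}. 2 * exp (- t\<^sup>2 / (2 * \<sigma>\<^sup>2)))"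
  proof (rule sum_mono)
    fix k assume "k \<in> {0..m}"
    have "sub_gaussian M \<sigma> (\<lambda>x. \<Sum>i\<in>{1..n}. haar_filter n k i * \<epsilon> i x)"
      using haar_filter_sum_squares[OF n, of k] \<open>k \<in> {0..m}\<close>
      by (intro sub_gaussian_weighted_sum[OF \<open>prob_space M\<close> _ indep subg]) auto
    then show "measure M {x\<in>space M. t < \<bar>Z k x\<bar>} \<le> 2 * exp (- t\<^sup>2 / (2 * \<sigma>\<^sup>2))"
      using sub_gaussian_abs_tail[OF \<open>prob_space M\<close> Z_measurable] assms(6,7)
      by (simp add: Z_def haar_coeff_def)
  qed
  finally show ?thesis by (simp add: Z_def algebra_simps)
qed

lemma alg1_haar_error_prob_union:
  fixes \<sigma> L K \<delta> :: real
  assumes "prob_space M" and n: "n = 2 ^ m"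
    and rv: "\<And>i. i \<in> {1..n} \<Longrightarrow> \<epsilon> i \<in> borel_measurable M"
    and indep: "prob_space.indep_vars M (\<lambda>_. borel) \<epsilon> {1..n}"
    and subg: "\<And>i. i \<in> {1..n} \<Longrightarrow> sub_gaussian M \<sigma> (\<epsilon> i)"
    and "0 < \<sigma>" "3/2 \<le> L" "lam = 2 * \<sigma> * L" "r \<in> {1..n}"
    and K: "4 * L * (real m + 1) \<le> K"
    and tail: "2 * (real m + 1) * exp (- 9/8 * L\<^sup>2) \<le> \<delta>"
  shows "measure M {x\<in>space M. \<not> \<bar>alg1 n (haar n) lam (\<lambda>i. \<theta> i + \<epsilon> i x) - \<theta> 1\<bar> \<le> K * U_fun \<sigma> \<theta> r} \<le> \<delta>"
proof -
  interpret prob_space M by fact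
  define t where "t = 3/2 * \<sigma> * L"
  have "0 \<le> t" using assms(6,7) by (simp add: t_def)
  have "0 \<le> U_fun \<sigma> \<theta> r"
    using U_fun_ge_noise[of \<sigma> r \<theta>] \<open>0 < \<sigma>\<close> by (smt (verit) divide_nonneg_nonneg real_sqrt_ge_zero of_nat_0_le_iff)
  have good: "\<bar>alg1 n (haar n) lam (\<lambda>i. \<theta> i + \<epsilon> i x) - \<theta> 1\<bar> \<le> K * U_fun \<sigma> \<theta> r"
    if "\<forall>k\<le>m. \<bar>haar_coeff n k (\<lambda>i. \<epsilon> i x)\<bar> \<le> t" for x
  proof -
    have "\<bar>alg1 n (haar n) lam (\<lambda>i. \<theta> i + \<epsilon> i x) - \<theta> 1\<bar> \<le> 4 * L * (real m + 1) * U_fun \<sigma> \<theta> r"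
      using that assms(6-9) by (intro alg1_haar_error_le_if_noise_small[OF n]) (auto simp: t_def)
    also have "\<dots> \<le> K * U_fun \<sigma> \<theta> r"
      using K \<open>0 \<le> U_fun \<sigma> \<theta> r\<close> by (intro mult_right_mono) (auto simp: add.commute)
    finally show ?thesis .
  qed
  then have "measure M {x\<in>space M. \<not> \<bar>alg1 n (haar n) lam (\<lambda>i. \<theta> i + \<epsilon> i x) - \<theta> 1\<bar> \<le> K * U_fun \<sigma> \<theta> r}
      \<le> measure M {x\<in>space M. \<exists>k\<le>m. t < \<bar>haar_coeff n k (\<lambda>i. \<epsilon> i x)\<bar>}"
    using haar_coeff_measurable[of n \<epsilon> M _ "\<lambda>_. 0", OF rv] good
    by (intro finite_measure_mono) (auto simp: not_le, meson not_le)
  also have "\<dots> \<le> 2 * (real m + 1) * exp (- t\<^sup>2 / (2 * \<sigma>\<^sup>2))"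
    by (rule haar_noise_exceeds_prob[OF \<open>prob_space M\<close> n rv indep subg \<open>0 < \<sigma>\<close> \<open>0 \<le> t\<close>])
  also have "- t\<^sup>2 / (2 * \<sigma>\<^sup>2) = - 9/8 * L\<^sup>2"
    using \<open>0 < \<sigma>\<close> by (simp add: t_def field_simps power2_eq_square)
  finally show ?thesis using tail by linarith
qed

lemma alg1_haar_error_prob_crude:
  fixes \<sigma> c K U \<delta> :: real
  assumes "prob_space M" and n: "n = 2 ^ m"
    and "\<epsilon> 1 \<in> borel_measurable M" "sub_gaussian M \<sigma> (\<epsilon> 1)" "0 < \<sigma>"
    and "0 \<le> c" and margin: "\<bar>lam\<bar> * (\<Sum>k=0..m. \<bar>haar_filter n k 1\<bar>) + \<sigma> * c \<le> K * U"
    and tail: "2 * exp (- c\<^sup>2 / 2) \<le> \<delta>"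
  shows "measure M {x\<in>space M. \<not> \<bar>alg1 n (haar n) lam (\<lambda>i. \<theta> i + \<epsilon> i x) - \<theta> 1\<bar> \<le> K * U} \<le> \<delta>"
proof -
  interpret prob_space M by fact
  have "\<sigma> * c < \<bar>\<epsilon> 1 x\<bar>" if "\<not> \<bar>alg1 n (haar n) lam (\<lambda>i. \<theta> i + \<epsilon> i x) - \<theta> 1\<bar> \<le> K * U" for x
    using alg1_haar_error_crude[OF n, of lam \<theta> "\<lambda>i. \<epsilon> i x"] that margin by linarith
  then have "measure M {x\<in>space M. \<not> \<bar>alg1 n (haar n) lam (\<lambda>i. \<theta> i + \<epsilon> i x) - \<theta> 1\<bar> \<le> K * U}
      \<le> measure M {x\<in>space M. \<sigma> * c < \<bar>\<epsilon> 1 x\<bar>}"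
    using assms(3) by (intro finite_measure_mono) auto
  also have "\<dots> \<le> 2 * exp (- (\<sigma> * c)\<^sup>2 / (2 * \<sigma>\<^sup>2))"
    using assms(1,3-6) by (intro sub_gaussian_abs_tail) auto
  also have "- (\<sigma> * c)\<^sup>2 / (2 * \<sigma>\<^sup>2) = - c\<^sup>2 / 2"
    using \<open>0 < \<sigma>\<close> by (simp add: field_simps power2_eq_square)
  finally show ?thesis using tail by linarith
qed

section \<open>Numerical estimates\<close>

lemma exp_ge_square_Taylor_quadratic:
  fixes y :: real
  assumes "0 \<le> y"
  shows "(1 + y + y\<^sup>2 / 2)\<^sup>2 \<le> exp (2 * y)"
proof -
  have "1 + y + y\<^sup>2 / 2 \<le> exp y" by (rule exp_lower_Taylor_quadratic[OF assms])
  moreover have "0 \<le> 1 + y + y\<^sup>2 / 2" using assms by simp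
  ultimately have "(1 + y + y\<^sup>2 / 2)\<^sup>2 \<le> (exp y)\<^sup>2" by (rule power_mono)
  then show ?thesis by (simp add: power2_eq_square flip: exp_add)
qed

lemma exp_9_8_le: "exp (9/8 :: real) \<le> 10/3"
proof -
  have "exp (9/8 :: real) = exp (9/64) ^ 8" by (simp flip: exp_of_nat_mult)
  also have "\<dots> \<le> (1 + 9/64 + (9/64)\<^sup>2) ^ 8"
    by (rule power_mono[OF exp_bound]) auto
  also have "\<dots> \<le> 10/3" by (simp add: power2_eq_square eval_nat_numeral)
  finally show ?thesis .
qed

lemma large_m_exponent_ge:
  fixes A :: real
  assumes "5 \<le> m" "real m * ln 2 < exp A"
  shows "9/8 \<le> A"
proof -
  have "exp (9/8) \<le> real m * ln 2"
    using exp_9_8_le ln2_ge_two_thirds mult_mono[of 5 "real m" "2/3" "ln 2"] assms(1) by simp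
  then have "exp (9/8) < exp A" using assms(2) by linarith
  then show ?thesis by simp
qed

lemma union_regime_tail:
  fixes A :: real
  assumes "4 \<le> m" "9/8 \<le> A"
  shows "2 * (real m + 1) * exp (- 9/8 * (sqrt (2 * A))\<^sup>2) \<le> real m * ln 2 * exp (- A)"
proof -
  have "38/10 \<le> exp (45/32 :: real)"
    using exp_ge_square_Taylor_quadratic[of "45/64"] by (simp add: power2_eq_square)
  also have "\<dots> \<le> exp (5/4 * A)" using assms(2) by simp
  finally have "2/3 * (38/10) \<le> ln 2 * exp (5/4 * A)"
    using ln2_ge_two_thirds by (intro mult_mono) auto
  then have "real m * (38/15) \<le> real m * (ln 2 * exp (5/4 * A))"
    by (intro mult_left_mono) simp_all
  moreover have "2 * (real m + 1) \<le> real m * (38/15)" using assms(1) by simp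
  ultimately have "2 * (real m + 1) \<le> real m * (ln 2 * exp (5/4 * A))"
    by (rule order_trans[rotated])
  then have "2 * (real m + 1) * exp (- (5/4 * A)) \<le> real m * ln 2"
    by (simp add: exp_minus field_simps)
  then have "2 * (real m + 1) * exp (- (5/4 * A)) * exp (- A) \<le> real m * ln 2 * exp (- A)"
    by (rule mult_right_mono) simp
  moreover have "exp (- 9/8 * (sqrt (2 * A))\<^sup>2) = exp (- (5/4 * A)) * exp (- A)"
    using assms(2) by (simp flip: exp_add)
  ultimately show ?thesis by (simp add: mult_ac)
qed

lemma sqrt_8_16: "sqrt 8 = 2 * sqrt (2::real)" "sqrt 16 = (4::real)"
  using real_sqrt_mult[of 4 2] real_sqrt_mult[of 4 4] by simp_all

lemma haar_weight_sums:
  "(\<Sum>k=0..1. \<bar>haar_filter (2 ^ 1) k 1\<bar>) = sqrt 2"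
  "(\<Sum>k=0..2. \<bar>haar_filter (2 ^ 2) k 1\<bar>) = 1 + 1 / sqrt 2"
  "(\<Sum>k=0..3. \<bar>haar_filter (2 ^ 3) k 1\<bar>) = 1/2 + sqrt 2"
  "(\<Sum>k=0..4. \<bar>haar_filter (2 ^ 4) k 1\<bar>) = 1 + 3 / (2 * sqrt 2)"
proof -
  show "(\<Sum>k=0..1. \<bar>haar_filter (2 ^ 1) k 1\<bar>) = sqrt 2"
    by (simp add: haar_filter_def real_div_sqrt)
  show "(\<Sum>k=0..2. \<bar>haar_filter (2 ^ 2) k 1\<bar>) = 1 + 1 / sqrt 2"
    by (simp add: haar_filter_def numeral_2_eq_2)
  show "(\<Sum>k=0..3. \<bar>haar_filter (2 ^ 3) k 1\<bar>) = 1/2 + sqrt 2"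
    by (simp add: haar_filter_def numeral_3_eq_3 sqrt_8_16 field_simps)
  show "(\<Sum>k=0..4. \<bar>haar_filter (2 ^ 4) k 1\<bar>) = 1 + 3 / (2 * sqrt 2)"
    by (simp add: haar_filter_def eval_nat_numeral sqrt_8_16 field_simps)
qed

lemma crude_margin_of_scale:
  fixes A a S :: real
  assumes "0 \<le> A" "0 \<le> a" "2 * S + a \<le> 4 * (real m + 1) / sqrt (2 ^ m)"
    and "2 * exp (- (a\<^sup>2 - 1) * A) \<le> real m * ln 2"
  defines "L \<equiv> sqrt (2 * A)"
  shows "\<exists>c\<ge>0. 2 * \<bar>L\<bar> * S + c \<le> max (4 * L) (2 * sqrt 2) * (real m + 1) / sqrt (2 ^ m) \<and>
    2 * exp (- c\<^sup>2 / 2) \<le> real m * ln 2 * exp (- A)"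
proof (intro exI[of _ "a * L"] conjI)
  have "0 \<le> L" using assms(1) by (simp add: L_def)
  then show "0 \<le> a * L" using assms(2) by simp
  have "2 * \<bar>L\<bar> * S + a * L = L * (2 * S + a)" using \<open>0 \<le> L\<close> by (simp add: algebra_simps)
  also have "\<dots> \<le> L * (4 * (real m + 1) / sqrt (2 ^ m))"
    using assms(3) \<open>0 \<le> L\<close> by (rule mult_left_mono)
  also have "\<dots> = 4 * L * (real m + 1) / sqrt (2 ^ m)" by simp
  also have "\<dots> \<le> max (4 * L) (2 * sqrt 2) * (real m + 1) / sqrt (2 ^ m)"
    by (intro divide_right_mono mult_right_mono) auto
  finally show "2 * \<bar>L\<bar> * S + a * L \<le> max (4 * L) (2 * sqrt 2) * (real m + 1) / sqrt (2 ^ m)" .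
  have "2 * exp (- (a * L)\<^sup>2 / 2) = 2 * exp (- (a\<^sup>2 - 1) * A) * exp (- A)"
    using assms(1) by (simp add: L_def power_mult_distrib algebra_simps flip: exp_add)
  also have "\<dots> \<le> real m * ln 2 * exp (- A)"
    using assms(4) by (rule mult_right_mono) simp
  finally show "2 * exp (- (a * L)\<^sup>2 / 2) \<le> real m * ln 2 * exp (- A)" .
qed

text \<open>For \<open>n = 2\<close> and \<open>\<delta> > ln 2\<close> the exponent \<open>A\<close> is negative, and then so are \<open>L = sqrt (2 * A)\<close>
  (\<open>sqrt\<close> is odd on the reals) and the threshold \<open>2 \<sigma> L\<close>; the crude bound only involves \<open>\<bar>L\<bar>\<close>.\<close>

lemma crude_margin_n_eq_2:
  fixes A :: real
  assumes "ln 2 < exp A"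
  defines "L \<equiv> sqrt (2 * A)"
  shows "\<exists>c\<ge>0. 2 * \<bar>L\<bar> * sqrt 2 + c \<le> max (4 * L) (2 * sqrt 2) * 2 / sqrt 2 \<and>
    2 * exp (- c\<^sup>2 / 2) \<le> ln 2 * exp (- A)"
proof -
  have "3 \<le> exp (7/4 :: real)"
    using exp_lower_Taylor_quadratic[of "7/4 :: real"] by (simp add: power2_eq_square)
  then have "2 * exp (- 7/4) \<le> (2/3 :: real)" by (simp add: exp_minus field_simps)
  then have exp_7_4: "2 * exp (- 7/4) \<le> ln (2::real)" using ln2_ge_two_thirds by linarith
  have "4 = 2 * sqrt 2 * 2 / sqrt (2::real)" by simp
  also have "\<dots> \<le> max (4 * L) (2 * sqrt 2) * 2 / sqrt 2"
    by (intro divide_right_mono mult_right_mono) auto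
  finally have four_le: "4 \<le> max (4 * L) (2 * sqrt 2) * 2 / sqrt 2" .
  have "\<bar>L\<bar> * sqrt 2 = sqrt (4 * \<bar>A\<bar>)"
    by (simp add: L_def abs_mult flip: real_sqrt_abs' real_sqrt_mult)
  then have abs_L: "2 * \<bar>L\<bar> * sqrt 2 = 4 * sqrt \<bar>A\<bar>"
    by (simp add: real_sqrt_mult)
  consider "1/4 \<le> A" | "\<bar>A\<bar> \<le> 1/4" | "A < -1/4" by linarith
  then show ?thesis
  proof cases
    case 1
    have "exp (- (7 * A)) \<le> exp (- 7/4)" using 1 by simp
    then have "2 * exp (- (7 * A)) \<le> ln 2" using exp_7_4 by linarith
    then have "2 * exp (- ((2 * sqrt 2)\<^sup>2 - 1) * A) \<le> real 1 * ln 2"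
      by (simp add: power_mult_distrib)
    moreover have "2 * sqrt 2 + 2 * sqrt 2 \<le> 4 * (real 1 + 1) / sqrt (2 ^ 1)"
      by (simp add: field_simps)
    ultimately have "\<exists>c\<ge>0. 2 * \<bar>L\<bar> * sqrt 2 + c \<le> max (4 * L) (2 * sqrt 2) * (real 1 + 1) / sqrt (2 ^ 1) \<and>
        2 * exp (- c\<^sup>2 / 2) \<le> real 1 * ln 2 * exp (- A)"
      using 1 unfolding L_def by (intro crude_margin_of_scale[where a="2 * sqrt 2"]) auto
    then show ?thesis by simp
  next
    case 2
    have "sqrt \<bar>A\<bar> \<le> 1/2" using 2 by (intro real_le_lsqrt) (auto simp: power2_eq_square)
    then have "2 * \<bar>L\<bar> * sqrt 2 + 2 \<le> max (4 * L) (2 * sqrt 2) * 2 / sqrt 2"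
      using abs_L four_le by linarith
    moreover have "2 * exp (- 2\<^sup>2 / 2) \<le> ln 2 * exp (- A)"
    proof -
      have "2 * exp (- 2\<^sup>2 / 2) = 2 * exp (- 7/4) * exp (- 1/4 :: real)" by (simp flip: exp_add)
      also have "\<dots> \<le> ln 2 * exp (- A)"
        using exp_7_4 2 by (intro mult_mono) auto
      finally show ?thesis .
    qed
    ultimately show ?thesis by (intro exI[of _ 2]) simp
  next
    case 3
    have "2/3 < exp A" using assms(1) ln2_ge_two_thirds by linarith
    then have "exp (- A) < 3/2" by (simp add: exp_minus field_simps)
    moreover have "3/2 \<le> exp (41/100 :: real)"
      using exp_ge_square_Taylor_quadratic[of "41/200"] by (simp add: power2_eq_square)
    ultimately have "- A < 41/100" by (metis exp_less_cancel_iff less_le_trans)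
    then have "sqrt \<bar>A\<bar> \<le> 257/400" using 3 by (intro real_le_lsqrt) (auto simp: power2_eq_square)
    then have "2 * \<bar>L\<bar> * sqrt 2 + 143/100 \<le> max (4 * L) (2 * sqrt 2) * 2 / sqrt 2"
      using abs_L four_le by linarith
    moreover have "2 * exp (- (143/100)\<^sup>2 / 2) \<le> ln 2 * exp (- A)"
    proof -
      have "12/5 \<le> exp (20449/20000 :: real)"
        using exp_lower_Taylor_quadratic[of "20449/20000 :: real"] by (simp add: power2_eq_square)
      then have "2 * exp (- (143/100)\<^sup>2 / 2) \<le> 2/3 * (5/4 :: real)"
        by (simp add: power2_eq_square exp_minus field_simps)
      also have "\<dots> \<le> ln 2 * exp (- A)"
        using ln2_ge_two_thirds exp_ge_add_one_self[of "- A"] 3 by (intro mult_mono) auto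
      finally show ?thesis .
    qed
    ultimately show ?thesis by (intro exI[of _ "143/100"]) simp
  qed
qed

lemma crude_regime_margin:
  fixes A :: real
  assumes "1 \<le> m" "m \<le> 4" "m = 4 \<Longrightarrow> A < 9/8" "real m * ln 2 < exp A"
  defines "L \<equiv> sqrt (2 * A)"
  shows "\<exists>c\<ge>0. 2 * \<bar>L\<bar> * (\<Sum>k=0..m. \<bar>haar_filter (2 ^ m) k 1\<bar>) + c
                \<le> max (4 * L) (2 * sqrt 2) * (real m + 1) / sqrt (2 ^ m) \<and>
              2 * exp (- c\<^sup>2 / 2) \<le> real m * ln 2 * exp (- A)"
proof -
  have sqrt2: "14142/10000 \<le> sqrt (2::real)" "sqrt (2::real) \<le> 3/2"
    by (rule real_le_rsqrt real_le_lsqrt; simp add: power2_eq_square)+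
  have A_nonneg: "0 \<le> A" if "2 \<le> m"
  proof -
    have "1 \<le> real m * ln 2" using that ln2_ge_two_thirds mult_mono[of 2 "real m" "2/3" "ln 2"] by simp
    then have "1 < exp A" using assms(4) by linarith
    then show ?thesis by simp
  qed
  consider "m = 1" | "m = 2" | "m = 3" | "m = 4" using assms(1,2) by linarith
  then show ?thesis
  proof cases
    case 1
    have S: "(\<Sum>k=0..m. \<bar>haar_filter (2 ^ m) k 1\<bar>) = sqrt 2" using haar_weight_sums(1) 1 by simp
    obtain c where "0 \<le> c" "2 * \<bar>L\<bar> * sqrt 2 + c \<le> max (4 * L) (2 * sqrt 2) * 2 / sqrt 2"
      "2 * exp (- c\<^sup>2 / 2) \<le> ln 2 * exp (- A)"
      using crude_margin_n_eq_2[of A] assms(4) 1 unfolding L_def by auto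
    then show ?thesis unfolding S using 1 by (intro exI[of _ c]) simp
  next
    case 2
    have S: "(\<Sum>k=0..m. \<bar>haar_filter (2 ^ m) k 1\<bar>) = 1 + 1 / sqrt 2" using haar_weight_sums(2) 2 by simp
    have "exp (1/4 :: real) \<le> 1 + 1/4 + (1/4)\<^sup>2" by (rule exp_bound) auto
    also have "\<dots> < real m * ln 2" using 2 ln2_ge_two_thirds by (simp add: power2_eq_square)
    also have "\<dots> < exp A" by (rule assms(4))
    finally have "1/4 \<le> A" by simp
    have "exp (- ((5/2)\<^sup>2 - 1) * A) \<le> exp (- 21/16)" using \<open>1/4 \<le> A\<close> by (simp add: power2_eq_square)
    moreover have "exp (- 21/16) \<le> (16/37 :: real)"
      using exp_ge_add_one_self[of "21/16 :: real"] by (simp add: exp_minus field_simps)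
    moreover have "real m * ln 2 = 2 * ln 2" using 2 by simp
    ultimately have tail: "2 * exp (- ((5/2)\<^sup>2 - 1) * A) \<le> real m * ln 2"
      using ln2_ge_two_thirds by linarith
    have margin: "2 * (1 + 1 / sqrt 2) + 5/2 \<le> 4 * (real m + 1) / sqrt (2 ^ m)"
      using 2 sqrt2 by (simp add: real_div_sqrt)
    from tail margin show ?thesis
      unfolding S L_def using \<open>1/4 \<le> A\<close> by (intro crude_margin_of_scale[where a="5/2"]) auto
  next
    case 3
    have S: "(\<Sum>k=0..m. \<bar>haar_filter (2 ^ m) k 1\<bar>) = 1/2 + sqrt 2" using haar_weight_sums(3) 3 by simp
    have "exp (- ((3/2)\<^sup>2 - 1) * A) \<le> 1"
      using 3 A_nonneg by (simp add: power2_eq_square)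
    moreover have "real m * ln 2 = 3 * ln 2" using 3 by simp
    ultimately have tail: "2 * exp (- ((3/2)\<^sup>2 - 1) * A) \<le> real m * ln 2"
      using ln2_ge_two_thirds by linarith
    have "4 * (real m + 1) / sqrt (2 ^ m) = 4 * sqrt 2"
      using 3 by (simp add: sqrt_8_16 field_simps)
    with tail show ?thesis
      unfolding S L_def using 3 A_nonneg sqrt2
      by (intro crude_margin_of_scale[where a="3/2"]) auto
  next
    case 4
    have S: "(\<Sum>k=0..m. \<bar>haar_filter (2 ^ m) k 1\<bar>) = 1 + 3 / (2 * sqrt 2)"
      using haar_weight_sums(4) 4 by simp
    define x where "x = 57279/250000 * A"
    have "0 \<le> x" "x \<le> 2578/10000" using 4 assms(3) A_nonneg by (simp_all add: x_def)
    then have "x\<^sup>2 \<le> (2578/10000)\<^sup>2" by (intro power_mono) auto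
    then have "1 + x + x\<^sup>2 \<le> 4/3" using \<open>x \<le> 2578/10000\<close> by (simp add: power2_eq_square)
    moreover have "exp x \<le> 1 + x + x\<^sup>2" using \<open>0 \<le> x\<close> \<open>x \<le> 2578/10000\<close> by (intro exp_bound) auto
    moreover have "real m * ln 2 = 4 * ln 2" using 4 by simp
    ultimately have "2 * exp x \<le> real m * ln 2" using ln2_ge_two_thirds by linarith
    then have tail: "2 * exp (- ((439/500)\<^sup>2 - 1) * A) \<le> real m * ln 2"
      by (simp add: x_def power2_eq_square)
    have "3 / sqrt 2 \<le> (2122/1000 :: real)" using sqrt2 by (simp add: divide_le_eq)
    then have margin: "2 * (1 + 3 / (2 * sqrt 2)) + 439/500 \<le> 4 * (real m + 1) / sqrt (2 ^ m)"
      using 4 by (simp add: sqrt_8_16 field_simps)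
    from tail margin show ?thesis
      unfolding S L_def using 4 A_nonneg
      by (intro crude_margin_of_scale[where a="439/500"]) auto
  qed
qed

lemma alg1_haar_failure_prob:
  fixes A \<sigma> :: real
  assumes "prob_space M" and n: "n = 2 ^ m" and "1 \<le> m"
    and rv: "\<And>i. i \<in> {1..n} \<Longrightarrow> \<epsilon> i \<in> borel_measurable M"
    and indep: "prob_space.indep_vars M (\<lambda>_. borel) \<epsilon> {1..n}"
    and subg: "\<And>i. i \<in> {1..n} \<Longrightarrow> sub_gaussian M \<sigma> (\<epsilon> i)"
    and "0 < \<sigma>" "r \<in> {1..n}" "real m * ln 2 < exp A"
  defines "L \<equiv> sqrt (2 * A)"
  defines "K \<equiv> max (4 * L) (2 * sqrt 2) * (real m + 1)"
  shows "measure M {x\<in>space M. \<not> \<bar>alg1 n (haar n) (2 * \<sigma> * L) (\<lambda>i. \<theta> i + \<epsilon> i x) - \<theta> 1\<bar>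
           \<le> K * U_fun \<sigma> \<theta> r} \<le> real m * ln 2 * exp (- A)"
proof (cases "4 \<le> m \<and> 9/8 \<le> A")
  case True
  have "3/2 \<le> L" unfolding L_def using True by (intro real_le_rsqrt) (simp add: power2_eq_square)
  moreover have "4 * L * (real m + 1) \<le> K" by (simp add: K_def)
  ultimately show ?thesis
    using True union_regime_tail[of m A] assms(7,8)
    by (intro alg1_haar_error_prob_union[OF assms(1) n rv indep subg]) (auto simp: L_def)
next
  case False
  then have "m \<le> 4" "m = 4 \<Longrightarrow> A < 9/8" using large_m_exponent_ge[OF _ assms(9)] by fastforce+
  then obtain c where "0 \<le> c"
    and margin: "2 * \<bar>L\<bar> * (\<Sum>k=0..m. \<bar>haar_filter n k 1\<bar>) + c \<le> K / sqrt (real n)"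
    and tail: "2 * exp (- c\<^sup>2 / 2) \<le> real m * ln 2 * exp (- A)"
    using crude_regime_margin[OF \<open>1 \<le> m\<close> _ _ assms(9)] n by (auto simp: L_def K_def)
  have "0 \<le> K" unfolding K_def by (intro mult_nonneg_nonneg) (auto simp: le_max_iff_disj)
  have "\<bar>2 * \<sigma> * L\<bar> * (\<Sum>k=0..m. \<bar>haar_filter n k 1\<bar>) + \<sigma> * c
      = \<sigma> * (2 * \<bar>L\<bar> * (\<Sum>k=0..m. \<bar>haar_filter n k 1\<bar>) + c)"
    using \<open>0 < \<sigma>\<close> by (simp add: abs_mult algebra_simps)
  also have "\<dots> \<le> \<sigma> * (K / sqrt (real n))"
    using margin \<open>0 < \<sigma>\<close> by (intro mult_left_mono) auto
  also have "\<dots> = K * (\<sigma> / sqrt (real n))" by simp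
  also have "\<dots> \<le> K * (\<sigma> / sqrt (real r))"
    using \<open>r \<in> {1..n}\<close> \<open>0 < \<sigma>\<close> \<open>0 \<le> K\<close> by (intro mult_left_mono divide_left_mono) auto
  also have "\<dots> \<le> K * U_fun \<sigma> \<theta> r"
    using U_fun_ge_noise \<open>0 \<le> K\<close> by (rule mult_left_mono)
  finally show ?thesis
    using assms(1,7) rv[of 1] subg[of 1] \<open>0 \<le> c\<close> tail n
    by (intro alg1_haar_error_prob_crude[OF assms(1) n]) auto
qed

lemma alg1_haar_success_prob:
  fixes A \<sigma> :: real
  assumes "prob_space M" and n: "n = 2 ^ m" and "1 \<le> m"
    and rv: "\<And>i. i \<in> {1..n} \<Longrightarrow> \<epsilon> i \<in> borel_measurable M"
    and indep: "prob_space.indep_vars M (\<lambda>_. borel) \<epsilon> {1..n}"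
    and subg: "\<And>i. i \<in> {1..n} \<Longrightarrow> sub_gaussian M \<sigma> (\<epsilon> i)"
    and "0 < \<sigma>" "r \<in> {1..n}" "real m * ln 2 < exp A"
  defines "L \<equiv> sqrt (2 * A)"
  defines "K \<equiv> max (4 * L) (2 * sqrt 2) * (real m + 1)"
  shows "1 - real m * ln 2 * exp (- A) \<le> measure M {x\<in>space M.
           \<bar>alg1 n (haar n) (2 * \<sigma> * L) (\<lambda>i. \<theta> i + \<epsilon> i x) - \<theta> 1\<bar> \<le> K * U_fun \<sigma> \<theta> r}"
proof -
  interpret prob_space M by fact
  have "{x\<in>space M. \<bar>alg1 n (haar n) (2 * \<sigma> * L) (\<lambda>i. \<theta> i + \<epsilon> i x) - \<theta> 1\<bar> \<le> K * U_fun \<sigma> \<theta> r} \<in> events"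
    using alg1_haar_measurable[OF n rv] by measurable
  from prob_neg[OF this] show ?thesis
    using alg1_haar_failure_prob[OF assms(1-9), of \<theta>] unfolding L_def K_def by linarith
qed

theorem theorem1:
  fixes M :: "'a measure" and m :: nat and n :: nat and \<delta> \<sigma> :: real
    and \<theta> :: "nat \<Rightarrow> real" and \<epsilon> :: "nat \<Rightarrow> 'a \<Rightarrow> real"
  assumes "prob_space M"
    and n_def: "n = 2 ^ m" and "m \<ge> 1"
    and "0 < \<delta>" "\<delta> < 1"
    and "0 < \<sigma>"
    and rv: "\<And>i. i \<in> {1..n} \<Longrightarrow> \<epsilon> i \<in> borel_measurable M"
    and indep: "prob_space.indep_vars M (\<lambda>_. borel) \<epsilon> {1..n}"
    and ident: "\<And>i j. i \<in> {1..n} \<Longrightarrow> j \<in> {1..n} \<Longrightarrow> distr M borel (\<epsilon> i) = distr M borel (\<epsilon> j)"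
    and mean0: "\<And>i. i \<in> {1..n} \<Longrightarrow> integrable M (\<epsilon> i) \<and> (\<integral>x. \<epsilon> i x \<partial>M) = 0"
    and subg: "\<And>i. i \<in> {1..n} \<Longrightarrow> sub_gaussian M \<sigma> (\<epsilon> i)"
  shows "measure M {x \<in> space M.
           \<bar>alg1 n (haar n) (2 * \<sigma> * sqrt (2 * ln (ln (real n) / \<delta>))) (\<lambda>i. \<theta> i + \<epsilon> i x) - \<theta> 1\<bar>
             \<le> (max (4 * sqrt (2 * ln (ln (real n) / \<delta>))) (2 * sqrt 2) * (log 2 (real n) + 1))
                 * U_fun \<sigma> \<theta> (r_star n \<sigma> \<theta>)}
         \<ge> 1 - \<delta>"
proof -
  define A where "A = ln (ln (real n) / \<delta>)"
  have "ln (real n) = real m * ln 2" and log_n: "log 2 (real n) = real m"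
    using n_def by (simp_all add: ln_realpow log_nat_power)
  moreover have "0 < ln (real n)" using n_def \<open>m \<ge> 1\<close> by simp
  ultimately have exp_A: "exp A = real m * ln 2 / \<delta>" and "0 < real m * ln 2"
    using \<open>0 < \<delta>\<close> by (simp_all add: A_def)
  moreover have "real m * ln 2 * \<delta> < real m * ln 2 * 1"
    using \<open>\<delta> < 1\<close> \<open>0 < real m * ln 2\<close> by (rule mult_strict_left_mono)
  ultimately have "real m * ln 2 < exp A" using \<open>0 < \<delta>\<close> by (simp add: less_divide_eq)
  have \<delta>: "\<delta> = real m * ln 2 * exp (- A)"
    using exp_A \<open>0 < \<delta>\<close> by (simp add: exp_minus field_simps)
  have "r_star n \<sigma> \<theta> \<in> {1..n}" using n_def by (intro r_star_mem) simp
  from alg1_haar_success_prob[OF assms(1) n_def \<open>m \<ge> 1\<close> rv indep subg \<open>0 < \<sigma>\<close> this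
      \<open>real m * ln 2 < exp A\<close>, of \<theta>]
  show ?thesis unfolding A_def[symmetric] log_n by (subst \<delta>)
qed

end
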